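(* Let $F$ be a field of characteristic $0$, let $G$ be a group such that its abelianization $\widetilde G=G/[G,G]$ is finitely generated, and let $A$ be an $F$-vector space endowed with a linear right $G$-action $a\mapsto a^g$. If $\dim_F A^G<\infty$, then $\dim_F \mathcal P_n(G,A)<\infty$ for every $n\in\mathbb Z_+$.
   Context: A right $G$-action on $A$ means maps $a\mapsto a^g$ with $a^{\mathbf e}=a$ and $(a^g)^h=a^{gh}$, where $\mathbf e$ is the identity of $G$; "linear" means each $a\mapsto a^g$ is $F$-linear. $A^G=\{a\in A: a^g=a \ \forall g\in G\}$. For $n\ge 0$, $\mathcal C^n(G,A)$ is the space of normalized $n$-cochains: $\mathcal C^0(G,A)=A$, and for $n\ge1$ it consists of all functions $c:G^n\to A$ with $c(g_1,\dots,g_n)=0$ whenever some $g_i=\mathbf e$. For $n\ge1$ define $d_n:\mathcal C^{n-1}(G,A)\to\mathcal C^n(G,A)$ by $(d_nc)(g_1,\dots,g_n)=[c(g_1,\dots,g_{n-1})]^{g_n}-c(g_1,\dots,g_{n-1})$ (for $n=1$: $(d_1a)(g_1)=a^{g_1}-a$). The iterated difference operators are $D^0=\mathrm{id}_A$ and $D^n=d_nD^{n-1}$ for $n\ge1$. The space of $G$-polynomials (polynomial-like elements) of order at most $n$ is $\mathcal P_n(G,A)=\ker\big(D^{n+1}:A\to\mathcal C^{n+1}(G,A)\big)$. *)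

theory Defs
  imports Main "HOL-Algebra.Algebra"
begin

definition linear_right_action ::
  "('f::field \<Rightarrow> 'a::ab_group_add \<Rightarrow> 'a) \<Rightarrow> ('g, 'b) monoid_scheme \<Rightarrow> ('a \<Rightarrow> 'g \<Rightarrow> 'a) \<Rightarrow> bool" where
  "linear_right_action scale G act \<longleftrightarrow>
     (\<forall>a. act a \<one>\<^bsub>G\<^esub> = a) \<and>
     (\<forall>a. \<forall>g\<in>carrier G. \<forall>h\<in>carrier G. act (act a g) h = act a (g \<otimes>\<^bsub>G\<^esub> h)) \<and>
     (\<forall>g\<in>carrier G. Vector_Spaces.linear scale scale (\<lambda>a. act a g))"

definition invariants :: "('g, 'b) monoid_scheme \<Rightarrow> ('a \<Rightarrow> 'g \<Rightarrow> 'a) \<Rightarrow> 'a set" where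
  "invariants G act = {a. \<forall>g\<in>carrier G. act a g = a}"

text \<open>Iterated difference operator: iter_diff act n a gs is (D^n a)(g_1,...,g_n)
  with g_i = gs (i-1).\<close>
fun iter_diff :: "('a::ab_group_add \<Rightarrow> 'g \<Rightarrow> 'a) \<Rightarrow> nat \<Rightarrow> 'a \<Rightarrow> (nat \<Rightarrow> 'g) \<Rightarrow> 'a" where
  "iter_diff act 0 a gs = a"
| "iter_diff act (Suc n) a gs = act (iter_diff act n a gs) (gs n) - iter_diff act n a gs"

definition poly_elems :: "('g, 'b) monoid_scheme \<Rightarrow> ('a::ab_group_add \<Rightarrow> 'g \<Rightarrow> 'a) \<Rightarrow> nat \<Rightarrow> 'a set" where
  "poly_elems G act n =
     {a. \<forall>gs. (\<forall>i<Suc n. gs i \<in> carrier G) \<longrightarrow> iter_diff act (Suc n) a gs = 0}"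

definition fin_dim :: "('f::field \<Rightarrow> 'a::ab_group_add \<Rightarrow> 'a) \<Rightarrow> 'a set \<Rightarrow> bool" where
  "fin_dim scale S \<longleftrightarrow> (\<exists>B. finite B \<and> B \<subseteq> S \<and> Modules.module.span scale B = S)"

definition fin_gen_group :: "('g, 'b) monoid_scheme \<Rightarrow> bool" where
  "fin_gen_group H \<longleftrightarrow> (\<exists>S. finite S \<and> S \<subseteq> carrier H \<and> generate H S = carrier H)"

end

theory Submission
  imports Defs
begin

(*
  Write P_n for the polynomials of order at most n, so that a is in P_n iff every displacement
  a^g - a lies in P_(n-1). For such a, the cocycle identity
    (a^g - a)^h - (a^g - a) = (a^(gh) - a) - (a^g - a) - (a^h - a)
  makes g |-> a^g - a a homomorphism modulo P_(n-1), so the g whose displacement lies in P_(n-1)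
  form a subgroup containing all commutators. Choose s_1, ..., s_k generating G modulo [G,G].
  If a in P_n is fixed by every s_i, that subgroup is all of G, and descending through the levels
  gives a in A^G. Starting from P_n /\ Fix(s_1, ..., s_k) = A^G, release the generators one at a
  time: the linear map a |-> a^(s_i) - a sends each stage into P_(n-1) with kernel the previous
  stage, so finite dimensionality propagates, and induction on n finishes the proof.
*)

definition diff_kernel ::
    "('g, 'b) monoid_scheme \<Rightarrow> ('a::ab_group_add \<Rightarrow> 'g \<Rightarrow> 'a) \<Rightarrow> nat \<Rightarrow> 'a set" where
  "diff_kernel G act j = {a. \<forall>gs. (\<forall>i<j. gs i \<in> carrier G) \<longrightarrow> iter_diff act j a gs = 0}"

definition fixed_points :: "('a \<Rightarrow> 'g \<Rightarrow> 'a) \<Rightarrow> 'g set \<Rightarrow> 'a set" where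
  "fixed_points act S = {a. \<forall>s\<in>S. act a s = a}"

lemma invariants_eq_fixed_points: "invariants G act = fixed_points act (carrier G)"
  unfolding invariants_def fixed_points_def ..

lemma poly_elems_eq_diff_kernel: "poly_elems G act n = diff_kernel G act (Suc n)"
  unfolding poly_elems_def diff_kernel_def by simp

lemma iter_diff_Suc_shift:
  "iter_diff act (Suc j) a gs = iter_diff act j (act a (gs 0) - a) (\<lambda>i. gs (Suc i))"
  by (induction j) auto

lemma diff_kernel_0 [simp]: "diff_kernel G act 0 = {0}"
  unfolding diff_kernel_def by auto

lemma diff_kernel_Suc:
  "a \<in> diff_kernel G act (Suc j) \<longleftrightarrow> (\<forall>g\<in>carrier G. act a g - a \<in> diff_kernel G act j)"
proof
  assume a: "a \<in> diff_kernel G act (Suc j)"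
  show "\<forall>g\<in>carrier G. act a g - a \<in> diff_kernel G act j"
  proof (intro ballI, unfold diff_kernel_def, intro CollectI allI impI)
    fix g gs assume "g \<in> carrier G" "\<forall>i<j. gs i \<in> carrier G"
    then have "\<forall>i<Suc j. case_nat g gs i \<in> carrier G"
      by (auto split: nat.split)
    with a have "iter_diff act (Suc j) a (case_nat g gs) = 0"
      unfolding diff_kernel_def by blast
    then show "iter_diff act j (act a g - a) gs = 0"
      unfolding iter_diff_Suc_shift by simp
  qed
next
  assume "\<forall>g\<in>carrier G. act a g - a \<in> diff_kernel G act j"
  then show "a \<in> diff_kernel G act (Suc j)"
    unfolding diff_kernel_def by (simp add: iter_diff_Suc_shift del: iter_diff.simps)
qed

lemma (in vector_space) fin_dim_zero: "fin_dim scale {0}"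
  unfolding fin_dim_def by (intro exI[of _ "{}"]) simp

lemma (in vector_space) fin_dim_of_fin_dim_image_kernel:
  assumes V: "subspace V" and f: "Vector_Spaces.linear scale scale f"
    and fV: "f ` V \<subseteq> W" and W: "fin_dim scale W" and K: "fin_dim scale {x\<in>V. f x = 0}"
  shows "fin_dim scale V"
proof -
  interpret f: module_hom scale scale f using f module_hom_iff_linear by blast
  obtain B where B: "finite B" "span B = W" using W unfolding fin_dim_def by blast
  obtain C where C: "C \<subseteq> f ` V" "independent C" "f ` V \<subseteq> span C"
    using basis_exists[of "f ` V"] by metis
  have "C \<subseteq> span B" using C(1) fV B(2) by simp
  then have "finite C" using independent_span_bound[OF B(1) C(2)] by simp
  then obtain C' where C': "C' \<subseteq> V" "finite C'" "C = f ` C'"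
    using finite_subset_image[OF _ C(1)] by metis
  obtain D where D: "finite D" "D \<subseteq> {x\<in>V. f x = 0}" "span D = {x\<in>V. f x = 0}"
    using K unfolding fin_dim_def by blast
  have "V \<subseteq> span (C' \<union> D)"
  proof
    fix v assume v: "v \<in> V"
    have "f v \<in> f ` span C'"
      using C(3) v unfolding C'(3) f.span_image by auto
    then obtain u where u: "u \<in> span C'" "f v = f u" by auto
    have "u \<in> V" using u(1) span_minimal[OF C'(1) V] by auto
    then have "v - u \<in> span D"
      unfolding D(3) using subspace_diff[OF V v] u(2) f.diff by simp
    then have "u + (v - u) \<in> span (C' \<union> D)"
      by (intro span_add) (use u(1) span_mono[of C' "C' \<union> D"] span_mono[of D "C' \<union> D"] in auto)
    then show "v \<in> span (C' \<union> D)" by simp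
  qed
  moreover have "span (C' \<union> D) \<subseteq> V"
    by (rule span_minimal[OF _ V]) (use C'(1) D(2) in auto)
  ultimately show ?thesis
    unfolding fin_dim_def using C'(1,2) D(1,2) by (intro exI[of _ "C' \<union> D"]) auto
qed

lemma (in group) quasi_hom_preimage_subgroup:
  fixes \<phi> :: "'a \<Rightarrow> 'c::ab_group_add"
  assumes add: "\<And>x y. x \<in> W \<Longrightarrow> y \<in> W \<Longrightarrow> x + y \<in> W"
    and neg: "\<And>x. x \<in> W \<Longrightarrow> - x \<in> W"
    and quasi: "\<And>g h. g \<in> carrier G \<Longrightarrow> h \<in> carrier G \<Longrightarrow> \<phi> (g \<otimes> h) - \<phi> g - \<phi> h \<in> W"
  shows "subgroup {g \<in> carrier G. \<phi> g \<in> W} G"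
    and "derived_set G (carrier G) \<subseteq> {g \<in> carrier G. \<phi> g \<in> W}"
proof -
  have diff: "x - y \<in> W" if "x \<in> W" "y \<in> W" for x y
    using add[OF that(1) neg[OF that(2)]] by simp
  have one: "\<phi> \<one> \<in> W"
    using neg[OF quasi[OF one_closed one_closed]] by simp
  have inv: "\<phi> (inv g) + \<phi> g \<in> W" if g: "g \<in> carrier G" for g
    using diff[OF one quasi[OF g inv_closed[OF g]]] g by (simp add: algebra_simps)
  show "subgroup {g \<in> carrier G. \<phi> g \<in> W} G"
  proof (rule subgroupI)
    show "{g \<in> carrier G. \<phi> g \<in> W} \<noteq> {}" using one by blast
  next
    fix g assume "g \<in> {g \<in> carrier G. \<phi> g \<in> W}"
    then show "inv g \<in> {g \<in> carrier G. \<phi> g \<in> W}"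
      using diff[OF inv] by fastforce
  next
    fix g h assume "g \<in> {g \<in> carrier G. \<phi> g \<in> W}" "h \<in> {g \<in> carrier G. \<phi> g \<in> W}"
    then show "g \<otimes> h \<in> {g \<in> carrier G. \<phi> g \<in> W}"
      using add[OF add[OF quasi]] by fastforce
  qed auto
  show "derived_set G (carrier G) \<subseteq> {g \<in> carrier G. \<phi> g \<in> W}"
  proof
    fix c assume "c \<in> derived_set G (carrier G)"
    then obtain g h where g: "g \<in> carrier G" and h: "h \<in> carrier G"
      and c: "c = g \<otimes> h \<otimes> inv g \<otimes> inv h" by blast
    define k where "k = g \<otimes> h \<otimes> inv g"
    have k: "k \<in> carrier G" and c_k: "c = k \<otimes> inv h"
      using g h by (simp_all add: k_def c)
    have "(\<phi> c - \<phi> k - \<phi> (inv h)) + (\<phi> k - \<phi> (g \<otimes> h) - \<phi> (inv g))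
        + (\<phi> (g \<otimes> h) - \<phi> g - \<phi> h) + (\<phi> (inv g) + \<phi> g) + (\<phi> (inv h) + \<phi> h) \<in> W"
      unfolding c_k k_def using g h by (intro add quasi inv) auto
    then have "\<phi> c \<in> W" by (simp add: algebra_simps)
    then show "c \<in> {g \<in> carrier G. \<phi> g \<in> W}" using c_k k h by simp
  qed
qed

lemma (in group) subset_carrier_of_generate_eq:
  "generate G (S \<union> T) = carrier G \<Longrightarrow> S \<subseteq> carrier G"
  using generate.incl[of _ "S \<union> T" G] by blast

lemma (in group) generators_mod_derived_of_fin_gen_abelianization:
  assumes "fin_gen_group (G Mod derived G (carrier G))"
  obtains S where "finite S" "generate G (S \<union> derived_set G (carrier G)) = carrier G"
proof -
  define N where "N = derived G (carrier G)"
  interpret N: normal N G unfolding N_def by (rule derived_self_is_normal)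
  interpret quot: group_hom G "G Mod N" "\<lambda>a. N #> a"
    unfolding group_hom_def group_hom_axioms_def
    using N.factorgroup_is_group N.r_coset_hom_Mod is_group by simp
  obtain T where T: "finite T" "T \<subseteq> carrier (G Mod N)" "generate (G Mod N) T = carrier (G Mod N)"
    using assms unfolding fin_gen_group_def N_def by blast
  have "T \<subseteq> (\<lambda>a. N #> a) ` carrier G"
    using T(2) unfolding FactGroup_def RCOSETS_def by auto
  then obtain S where S: "S \<subseteq> carrier G" "finite S" "T = (\<lambda>a. N #> a) ` S"
    using finite_subset_image[OF T(1)] by metis
  let ?H = "generate G (S \<union> derived_set G (carrier G))"
  have H: "subgroup ?H G"
    using S(1) derived_set_incl[of "carrier G"] by (intro generate_is_subgroup) auto
  have "N \<subseteq> ?H"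
    unfolding N_def derived_def by (intro mono_generate) auto
  have "carrier G \<subseteq> ?H"
  proof
    fix g assume g: "g \<in> carrier G"
    have "N #> g \<in> generate (G Mod N) ((\<lambda>a. N #> a) ` S)"
      using T(3) S(3) quot.hom_closed[OF g] by simp
    also have "\<dots> = (\<lambda>a. N #> a) ` generate G S"
      by (rule quot.generate_img[OF S(1)])
    also have "\<dots> \<subseteq> (\<lambda>a. N #> a) ` ?H"
      by (intro image_mono mono_generate) auto
    finally obtain h where h: "h \<in> ?H" "N #> g = N #> h" by auto
    have "g \<in> N #> h"
      using rcos_self[OF g N.subgroup_axioms] h(2) by simp
    then obtain n where "n \<in> N" "g = n \<otimes> h" unfolding r_coset_def by auto
    then show "g \<in> ?H"
      using subgroup.m_closed[OF H] \<open>N \<subseteq> ?H\<close> h(1) by auto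
  qed
  then show ?thesis
    using that S(2) generate_incl[of "S \<union> derived_set G (carrier G)"] S(1) derived_set_incl[of "carrier G"]
    by auto
qed

locale linear_right_rep = vector_space scale + group G
  for scale :: "'f::field \<Rightarrow> 'a::ab_group_add \<Rightarrow> 'a"
    and G :: "('g, 'b) monoid_scheme" (structure) +
  fixes act :: "'a \<Rightarrow> 'g \<Rightarrow> 'a"
  assumes linear_right_action: "linear_right_action scale G act"
begin

lemma act_act: "g \<in> carrier G \<Longrightarrow> h \<in> carrier G \<Longrightarrow> act (act a g) h = act a (g \<otimes> h)"
  using linear_right_action unfolding linear_right_action_def by blast

lemma linear_act: "g \<in> carrier G \<Longrightarrow> Vector_Spaces.linear scale scale (\<lambda>a. act a g)"
  using linear_right_action unfolding linear_right_action_def by blast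

lemma module_hom_act: "g \<in> carrier G \<Longrightarrow> module_hom scale scale (\<lambda>a. act a g)"
  using linear_act module_hom_iff_linear by blast

lemma act_add: "g \<in> carrier G \<Longrightarrow> act (a + b) g = act a g + act b g"
  using module_hom.add[OF module_hom_act] .

lemma act_diff: "g \<in> carrier G \<Longrightarrow> act (a - b) g = act a g - act b g"
  using module_hom.diff[OF module_hom_act] .

lemma act_scale: "g \<in> carrier G \<Longrightarrow> act (scale c a) g = scale c (act a g)"
  using module_hom.scale[OF module_hom_act] .

lemma linear_displacement:
  "g \<in> carrier G \<Longrightarrow> Vector_Spaces.linear scale scale (\<lambda>a. act a g - a)"
  unfolding Vector_Spaces.linear_iff using vector_space_axioms
  by (simp add: act_add act_scale scale_right_diff_distrib algebra_simps)

lemma subspace_vimage_displacement: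
  "g \<in> carrier G \<Longrightarrow> subspace W \<Longrightarrow> subspace ((\<lambda>a. act a g - a) -` W)"
  using module_hom.subspace_vimage linear_displacement module_hom_iff_linear by blast

lemma subspace_fixed_points:
  assumes "S \<subseteq> carrier G" shows "subspace (fixed_points act S)"
proof -
  have "fixed_points act S = (\<Inter>s\<in>S. (\<lambda>a. act a s - a) -` {0})"
    unfolding fixed_points_def by auto
  also have "subspace \<dots>"
    using assms by (intro subspace_Int subspace_vimage_displacement subspace_single_0) auto
  finally show ?thesis .
qed

lemma subspace_diff_kernel: "subspace (diff_kernel G act j)"
proof (induction j)
  case (Suc j)
  have "diff_kernel G act (Suc j) = (\<Inter>g\<in>carrier G. (\<lambda>a. act a g - a) -` diff_kernel G act j)"
    unfolding set_eq_iff by (simp add: diff_kernel_Suc)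
  also have "subspace \<dots>"
    by (intro subspace_Int subspace_vimage_displacement Suc.IH)
  finally show ?case .
qed simp

lemma displacement_quasi_hom:
  assumes "\<forall>g\<in>carrier G. act a g - a \<in> diff_kernel G act (Suc j)"
    and g: "g \<in> carrier G" and h: "h \<in> carrier G"
  shows "(act a (g \<otimes> h) - a) - (act a g - a) - (act a h - a) \<in> diff_kernel G act j"
proof -
  have "act a g - a \<in> diff_kernel G act (Suc j)" using assms(1) g ..
  then have "act (act a g - a) h - (act a g - a) \<in> diff_kernel G act j"
    using h unfolding diff_kernel_Suc by blast
  moreover have "act (act a g - a) h - (act a g - a)
      = (act a (g \<otimes> h) - a) - (act a g - a) - (act a h - a)"
    using g h by (simp add: act_diff act_act)
  ultimately show ?thesis by simp
qed

lemma displacement_descends: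
  assumes gen: "generate G (S \<union> derived_set G (carrier G)) = carrier G"
    and fixed: "a \<in> fixed_points act S"
    and disp: "\<forall>g\<in>carrier G. act a g - a \<in> diff_kernel G act (Suc j)"
  shows "\<forall>g\<in>carrier G. act a g - a \<in> diff_kernel G act j"
proof -
  let ?N = "{g \<in> carrier G. act a g - a \<in> diff_kernel G act j}"
  have W: "subspace (diff_kernel G act j)" by (rule subspace_diff_kernel)
  note N = quasi_hom_preimage_subgroup[of "diff_kernel G act j" "\<lambda>g. act a g - a",
      OF subspace_add[OF W] subspace_neg[OF W] displacement_quasi_hom[OF disp]]
  have "S \<subseteq> ?N"
    using subset_carrier_of_generate_eq[OF gen] fixed subspace_0[OF W]
    unfolding fixed_points_def by auto
  then have "generate G (S \<union> derived_set G (carrier G)) \<subseteq> ?N"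
    using N by (intro generate_subgroup_incl) auto
  then show ?thesis unfolding gen by auto
qed

lemma diff_kernel_Int_fixed_generators:
  assumes gen: "generate G (S \<union> derived_set G (carrier G)) = carrier G"
  shows "diff_kernel G act (Suc j) \<inter> fixed_points act S = invariants G act"
proof
  have "S \<subseteq> carrier G" using subset_carrier_of_generate_eq[OF gen] .
  then have "invariants G act \<subseteq> fixed_points act S"
    unfolding invariants_eq_fixed_points fixed_points_def by auto
  moreover have "invariants G act \<subseteq> diff_kernel G act (Suc j)"
    using subspace_0[OF subspace_diff_kernel] by (auto simp: diff_kernel_Suc invariants_def)
  ultimately show "invariants G act \<subseteq> diff_kernel G act (Suc j) \<inter> fixed_points act S"
    by blast
next
  show "diff_kernel G act (Suc j) \<inter> fixed_points act S \<subseteq> invariants G act"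
  proof
    fix a assume a: "a \<in> diff_kernel G act (Suc j) \<inter> fixed_points act S"
    have descend: "\<forall>g\<in>carrier G. act a g - a \<in> diff_kernel G act 0"
      if "\<forall>g\<in>carrier G. act a g - a \<in> diff_kernel G act k" for k
      using that by (induction k) (use displacement_descends[OF gen] a in blast)+
    have "\<forall>g\<in>carrier G. act a g - a \<in> diff_kernel G act j"
      using a by (simp add: diff_kernel_Suc)
    from descend[OF this] show "a \<in> invariants G act"
      by (simp add: invariants_def)
  qed
qed

lemma fin_dim_diff_kernel_Suc:
  assumes S: "finite S" and gen: "generate G (S \<union> derived_set G (carrier G)) = carrier G"
    and inv: "fin_dim scale (invariants G act)" and IH: "fin_dim scale (diff_kernel G act j)"
  shows "fin_dim scale (diff_kernel G act (Suc j))"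
proof -
  have S_carrier: "S \<subseteq> carrier G"
    using subset_carrier_of_generate_eq[OF gen] .
  have "fin_dim scale (diff_kernel G act (Suc j) \<inter> fixed_points act (S - T))" if "T \<subseteq> S" for T
    using finite_subset[OF that S] that
  proof (induction T rule: finite_induct)
    case empty
    then show ?case using diff_kernel_Int_fixed_generators[OF gen] inv by simp
  next
    case (insert t T)
    let ?V = "diff_kernel G act (Suc j) \<inter> fixed_points act (S - insert t T)"
    have t: "t \<in> carrier G" using insert.prems S_carrier by blast
    have "subspace ?V"
      using S_carrier by (intro subspace_inter subspace_diff_kernel subspace_fixed_points) auto
    moreover have "(\<lambda>a. act a t - a) ` ?V \<subseteq> diff_kernel G act j"
      using t by (auto simp: diff_kernel_Suc)
    moreover have "{a \<in> ?V. act a t - a = 0} = diff_kernel G act (Suc j) \<inter> fixed_points act (S - T)"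
      using insert.hyps(2) insert.prems unfolding fixed_points_def by auto
    ultimately show ?case
      using fin_dim_of_fin_dim_image_kernel[OF _ linear_displacement[OF t] _ IH] insert by simp
  qed
  from this[of S] show ?thesis by (simp add: fixed_points_def)
qed

end

theorem mainTheorem1:
  fixes scale :: "'f::field_char_0 \<Rightarrow> 'a::ab_group_add \<Rightarrow> 'a"
    and G :: "('g, 'b) monoid_scheme"
    and act :: "'a \<Rightarrow> 'g \<Rightarrow> 'a"
  assumes "vector_space scale"
    and "group G"
    and "fin_gen_group (G Mod (derived G (carrier G)))"
    and "linear_right_action scale G act"
    and "fin_dim scale (invariants G act)"
  shows "\<forall>n::nat. fin_dim scale (poly_elems G act n)"
proof -
  interpret linear_right_rep scale G act
    using assms(1,2,4) by (simp add: linear_right_rep_def linear_right_rep_axioms_def)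
  obtain S where "finite S" "generate G (S \<union> derived_set G (carrier G)) = carrier G"
    using generators_mod_derived_of_fin_gen_abelianization assms(3) by blast
  then have "fin_dim scale (diff_kernel G act j)" for j
    by (induction j) (simp_all add: fin_dim_zero fin_dim_diff_kernel_Suc assms(5))
  then show ?thesis by (simp add: poly_elems_eq_diff_kernel)
qed

end
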